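(* Let $\alpha\in(0,1]$ and let $n$ be such that $n^\alpha=2^q$ for a positive integer $q$. Let $R\subset \mathrm{conv}(A_n)$ be an open axis-aligned rectangle of width $w(R)>1$, height $h(R)>1$ and area $w(R)h(R)\ge 4n^\alpha$. Then $B_n\cap R\neq\emptyset$.
   Context: Let $A_n=\{(i,j)\in\mathbb{Z}^2: 0\le i,j\le 14n\}$, so $\mathrm{conv}(A_n)=[0,14n]^2$. The sparse grid $B_n\subseteq A_n$ is the set of points of $A_n$ of at least one of the following forms: (1) $(i,j)$ with $n^\alpha \mid ij$; (2) $(i+k,j+k)$ with $n^\alpha\mid i$, $n^\alpha\mid j$, $k\in\{1,\dots,n^\alpha\}$ (forward diagonals); (3) $(i+k,j-k)$ with $n^\alpha\mid i$, $n^\alpha\mid j$, $k\in\{1,\dots,n^\alpha\}$ (backward diagonals). For an open rectangle $R=(x_1,x_2)\times(y_1,y_2)$, $w(R)=x_2-x_1$ and $h(R)=y_2-y_1$. *)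

theory Defs
  imports "HOL-Analysis.Analysis"
begin

definition grid_A :: "nat \<Rightarrow> (int \<times> int) set" where
  "grid_A n = {(i, j). 0 \<le> i \<and> i \<le> 14 * int n \<and> 0 \<le> j \<and> j \<le> 14 * int n}"

text \<open>The sparse grid B_n, where the parameter m stands for the integer n^alpha.\<close>
definition sparse_grid :: "nat \<Rightarrow> nat \<Rightarrow> (int \<times> int) set" where
  "sparse_grid n m = {p \<in> grid_A n.
      (\<exists>i j. p = (i, j) \<and> int m dvd i * j)
    \<or> (\<exists>i j k. (i, j) \<in> grid_A n \<and> int m dvd i \<and> int m dvd j \<and> 1 \<le> k \<and> k \<le> int m
               \<and> p = (i + k, j + k))
    \<or> (\<exists>i j k. (i, j) \<in> grid_A n \<and> int m dvd i \<and> int m dvd j \<and> 1 \<le> k \<and> k \<le> int m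
               \<and> p = (i + k, j - k))}"

definition open_rect :: "real \<Rightarrow> real \<Rightarrow> real \<Rightarrow> real \<Rightarrow> (real \<times> real) set" where
  "open_rect x1 x2 y1 y2 = {(x, y). x1 < x \<and> x < x2 \<and> y1 < y \<and> y < y2}"

end

theory Submission
  imports Defs
begin

text \<open>Choose dyadic scales \<open>2^a < w(R) \<le> 2^(a+1)\<close> and \<open>2^b < h(R) \<le> 2^(b+1)\<close>.
  Each side of \<open>R\<close> is longer than its scale, so it contains an integer multiple \<open>i\<close>
  of \<open>2^a\<close>, resp. \<open>j\<close> of \<open>2^b\<close>. The area bound \<open>2^(q+2) \<le> w(R) h(R) \<le> 2^(a+b+2)\<close>
  forces \<open>q \<le> a + b\<close>, so \<open>n^\<alpha> = 2^q\<close> divides \<open>i j\<close>: already the points of the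
  first kind in \<open>B_n\<close> meet \<open>R\<close>.\<close>

lemma power_of_two_bracket:
  fixes w :: real
  assumes "1 < w"
  obtains a :: nat where "2 ^ a < w" "w \<le> 2 ^ Suc a"
proof
  define a where "a = nat (\<lceil>log 2 w\<rceil> - 1)"
  have "0 < log 2 w" using assms by simp
  then have "\<lceil>log 2 w\<rceil> = int a + 1" unfolding a_def by linarith
  then have "2 powr a < w" "w \<le> 2 powr (a + 1)"
    using assms ceiling_log_eq_powr_iff[of w 2 a] by simp_all
  moreover have "2 powr (a + 1) = 2 ^ Suc a"
    by (simp add: powr_add powr_realpow)
  ultimately show "2 ^ a < w" "w \<le> 2 ^ Suc a"
    by (simp_all add: powr_realpow)
qed

lemma multiple_in_open_interval:
  fixes d x1 x2 :: real
  assumes "0 < d" "d < x2 - x1"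
  obtains k :: int where "x1 < k * d" "k * d < x2"
proof
  define k where "k = \<lfloor>x1 / d\<rfloor> + 1"
  have "x1 / d < k" "k \<le> x1 / d + 1" unfolding k_def by linarith+
  then have "x1 < k * d" "k * d \<le> x1 + d"
    using assms(1) by (simp_all add: field_simps)
  then show "x1 < k * d" "k * d < x2" using assms(2) by linarith+
qed

lemma open_interval_contains_dyadic_multiple:
  fixes x1 x2 :: real
  assumes "1 < x2 - x1"
  obtains a :: nat and i :: int
  where "x1 < i" "i < x2" "2 ^ a dvd i" "x2 - x1 \<le> 2 ^ Suc a"
proof -
  obtain a :: nat where a: "2 ^ a < x2 - x1" "x2 - x1 \<le> 2 ^ Suc a"
    using power_of_two_bracket assms by blast
  obtain k :: int where "x1 < k * 2 ^ a" "k * 2 ^ a < x2"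
    using multiple_in_open_interval[where d = "2 ^ a"] a(1) by auto
  then show thesis
    using that[of "k * 2 ^ a" a] a(2) by simp
qed

lemma open_rect_contains_point_with_divisible_product:
  fixes x1 x2 y1 y2 :: real and q :: nat
  assumes "1 < x2 - x1" "1 < y2 - y1" "2 ^ (q + 2) \<le> (x2 - x1) * (y2 - y1)"
  obtains i j :: int
  where "(real_of_int i, real_of_int j) \<in> open_rect x1 x2 y1 y2" "2 ^ q dvd i * j"
proof -
  obtain a :: nat and i :: int
    where i: "x1 < i" "i < x2" "2 ^ a dvd i" and a: "x2 - x1 \<le> 2 ^ Suc a"
    using open_interval_contains_dyadic_multiple assms(1) by blast
  obtain b :: nat and j :: int
    where j: "y1 < j" "j < y2" "2 ^ b dvd j" and b: "y2 - y1 \<le> 2 ^ Suc b"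
    using open_interval_contains_dyadic_multiple assms(2) by blast
  have "(2::real) ^ (q + 2) \<le> (x2 - x1) * (y2 - y1)" by fact
  also have "\<dots> \<le> 2 ^ Suc a * 2 ^ Suc b"
    using a b assms(1,2) by (intro mult_mono) auto
  also have "\<dots> = 2 ^ (a + b + 2)" by (simp add: power_add)
  finally have "q \<le> a + b" by (simp add: power_increasing_iff)
  then have "(2::int) ^ q dvd 2 ^ a * 2 ^ b"
    by (simp add: le_imp_power_dvd flip: power_add)
  also have "\<dots> dvd i * j" using i(3) j(3) by (rule mult_dvd_mono)
  finally show thesis
    using that i(1,2) j(1,2) unfolding open_rect_def by simp
qed

theorem lemma4:
  fixes \<alpha> :: real and n q :: nat and x1 x2 y1 y2 :: real
  assumes "0 < \<alpha>" and "\<alpha> \<le> 1"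
    and "0 < q" and "real n powr \<alpha> = 2 ^ q"
    and "0 \<le> x1" and "x2 \<le> 14 * real n" and "0 \<le> y1" and "y2 \<le> 14 * real n"
    and "x2 - x1 > 1" and "y2 - y1 > 1"
    and "(x2 - x1) * (y2 - y1) \<ge> 4 * real n powr \<alpha>"
  shows "\<exists>(i, j) \<in> sparse_grid n (2 ^ q). (real_of_int i, real_of_int j) \<in> open_rect x1 x2 y1 y2"
proof -
  have "2 ^ (q + 2) \<le> (x2 - x1) * (y2 - y1)"
    using assms(4,11) by (simp add: power_add)
  then obtain i j :: int
    where R: "(real_of_int i, real_of_int j) \<in> open_rect x1 x2 y1 y2" and "2 ^ q dvd i * j"
    using open_rect_contains_point_with_divisible_product assms(9,10) by blast
  moreover have "(i, j) \<in> grid_A n"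
  proof -
    have "0 < real_of_int i" "real_of_int i < 14 * real n"
      "0 < real_of_int j" "real_of_int j < 14 * real n"
      using R assms(5-8) unfolding open_rect_def by auto
    then show ?thesis unfolding grid_A_def by simp
  qed
  ultimately show ?thesis unfolding sparse_grid_def by auto
qed

end
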